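(* Let $G$ be a graph on $N\ge 21$ vertices with edges $e_1,\dots,e_m$, and for $0\le k\le m$ let $G_k$ be the graph on the same vertex set with edge set $\{e_1,\dots,e_k\}$. Fix $k$ with $0\le k\le m-1$, set $S=\mathcal I(G_k)$, $H=\mathcal I(G_{k+1})$ and $n=2N^2$. Let $A_1,\dots,A_n\in S$ be initial states (with an arbitrary joint distribution), and for each $i\in[n]$ run the BIDC Markov chain on $G_k$ from $A_i$ for $n$ steps, with fresh random choices independent across steps, chains, and of the initial states, producing states $X_{i0}=A_i,X_{i1},\dots,X_{in}$. Let $X$ be the $n\times n$ matrix whose $i$-th row is $(X_{i1},\dots,X_{in})$. Then the probability $p(X)$ that $X$ has no $H$-PM satisfies $p(X)\le e^{-N}$.
   Context: $\mathcal I(F)$ is the family of independent sets (including $\emptyset$) of a graph $F$. The Basic Insert/Delete Chain (BIDC) on a graph $F=(V,E)$ has state space $\mathcal I(F)$; from state $X_t$ it draws a vertex $u\in V$ uniformly at random and sets $X_{t+1}=X_t\setminus\{u\}$ if $u\in X_t$, $X_{t+1}=X_t\cup\{u\}$ if $u\notin X_t$ and $X_t\cup\{u\}\in\mathcal I(F)$, and $X_{t+1}=X_t$ otherwise. A perfect matching (PM) of an $n\times n$ matrix is $M=((i_1,1),\dots,(i_n,n))$ with $\{i_1,\dots,i_n\}=[n]$; an $H$-PM is a PM with $X_{i_j,j}\in H$ for all $j$. *)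

theory Defs
  imports "HOL-Probability.Probability"
begin

text \<open>Graphs: vertex set V (finite), edge set E of 2-element subsets of V.
  Independent sets of the graph (V, E), including the empty set.\<close>
definition indep_sets :: "'a set \<Rightarrow> 'a set set \<Rightarrow> 'a set set" where
  "indep_sets V E = {X. X \<subseteq> V \<and> (\<forall>e\<in>E. \<not> e \<subseteq> X)}"

definition bidc_step :: "'a set \<Rightarrow> 'a set set \<Rightarrow> 'a set \<Rightarrow> 'a set pmf" where
  "bidc_step V E X = map_pmf
     (\<lambda>u. if u \<in> X then X - {u}
          else if insert u X \<in> indep_sets V E then insert u X else X)
     (pmf_of_set V)"

text \<open>Run the chain for t steps from X0; result is the list [X_1, ..., X_t].\<close>
fun bidc_run :: "'a set \<Rightarrow> 'a set set \<Rightarrow> 'a set \<Rightarrow> nat \<Rightarrow> 'a set list pmf" where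
  "bidc_run V E X 0 = return_pmf []"
| "bidc_run V E X (Suc t) =
     bind_pmf (bidc_step V E X) (\<lambda>Y. map_pmf (\<lambda>ys. Y # ys) (bidc_run V E Y t))"

text \<open>The random n x n matrix: initial states A drawn from init (arbitrary joint law),
  then independent chains for rows i = 1..n, each run for n steps;
  entry (i,j) (1 \<le> i,j \<le> n) is X_{ij}.\<close>
definition bidc_matrix :: "'a set \<Rightarrow> 'a set set \<Rightarrow> (nat \<Rightarrow> 'a set) pmf \<Rightarrow> nat
    \<Rightarrow> (nat \<Rightarrow> nat \<Rightarrow> 'a set) pmf" where
  "bidc_matrix V E init n = bind_pmf init (\<lambda>A.
     map_pmf (\<lambda>R i j. R i ! (j - 1)) (Pi_pmf {1..n} [] (\<lambda>i. bidc_run V E (A i) n)))"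

definition has_H_PM :: "'b set \<Rightarrow> nat \<Rightarrow> (nat \<Rightarrow> nat \<Rightarrow> 'b) \<Rightarrow> bool" where
  "has_H_PM H n X = (\<exists>\<sigma>. bij_betw \<sigma> {1..n} {1..n} \<and> (\<forall>j\<in>{1..n}. X (\<sigma> j) j \<in> H))"

end

theory Submission
  imports Defs
begin

text \<open>Let \<open>e\<close> be the new edge of \<open>G\<^sub>k\<^sub>+\<^sub>1\<close>. Every entry of the matrix lies in \<open>S\<close>, and an entry of
  \<open>S\<close> outside \<open>H\<close> contains \<open>e\<close>. If there is no \<open>H\<close>-PM, Hall's theorem applied to the columns gives
  a set \<open>K\<close> of \<open>c\<close> columns and a set \<open>T\<close> of \<open>n + 1 - c\<close> rows all of whose common entries contain
  \<open>e\<close>. Whatever the current state, one BIDC step ends in a set containing \<open>e\<close> with probability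
  at most \<open>1 - 2/N\<close>, so, by the Markov property along each row and independence of the rows, a
  fixed such rectangle is bad with probability at most \<open>(1 - 2/N)\<^bsup>c(n+1-c)\<^esup>\<close>. A union bound over
  all \<open>c, K, T\<close> gives at most \<open>n\<^sup>3 e\<^sup>-\<^sup>2\<^sup>N \<le> e\<^sup>-\<^sup>N\<close>.\<close>

lemma inj_on_glue:
  assumes "inj_on f K" "f ` K \<subseteq> U" "inj_on g L" "g ` L \<inter> U = {}" "K \<inter> L = {}"
  shows "inj_on (\<lambda>i. if i \<in> K then f i else g i) (K \<union> L)"
  using assms unfolding inj_on_def
  by (smt (verit, ccfv_threshold) Un_iff disjoint_iff_not_equal image_eqI image_subset_iff)

lemma Hall_condition_Diff_tight:
  assumes fin: "finite I" "\<forall>i\<in>I. finite (A i)" and hall: "\<forall>K\<subseteq>I. card K \<le> card (\<Union>(A ` K))"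
    and K: "K \<subseteq> I" "card (\<Union>(A ` K)) = card K"
  shows "\<forall>L\<subseteq>I - K. card L \<le> card (\<Union>i\<in>L. A i - \<Union>(A ` K))"
proof (intro allI impI)
  fix L assume L: "L \<subseteq> I - K"
  have LK: "L \<union> K \<subseteq> I" using L K by auto
  have finLK: "finite (\<Union>(A ` (L \<union> K)))"
    using finite_subset[OF LK fin(1)] LK fin(2) by (intro finite_UN_I) auto
  have "(\<Union>i\<in>L. A i - \<Union>(A ` K)) = \<Union>(A ` (L \<union> K)) - \<Union>(A ` K)" by auto
  then have "card (\<Union>i\<in>L. A i - \<Union>(A ` K)) = card (\<Union>(A ` (L \<union> K))) - card (\<Union>(A ` K))"
    using finLK by (simp add: card_Diff_subset finite_subset)
  moreover have "card (L \<union> K) \<le> card (\<Union>(A ` (L \<union> K)))" using hall LK by blast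
  moreover have "card (L \<union> K) = card L + card K"
    using L finite_subset[OF LK fin(1)] by (subst card_Un_disjoint) auto
  ultimately show "card L \<le> card (\<Union>i\<in>L. A i - \<Union>(A ` K))" using K(2) by linarith
qed

lemma Hall_condition_Diff_singleton:
  assumes fin: "finite I" "\<forall>i\<in>I. finite (A i)" and hall: "\<forall>K\<subseteq>I. card K \<le> card (\<Union>(A ` K))"
    and no_tight: "\<forall>K\<subseteq>I. K \<noteq> {} \<longrightarrow> K \<noteq> I \<longrightarrow> card (\<Union>(A ` K)) \<noteq> card K"
    and "i0 \<in> I"
  shows "\<forall>L\<subseteq>I - {i0}. card L \<le> card (\<Union>i\<in>L. A i - {x})"
proof (intro allI impI)
  fix L assume L: "L \<subseteq> I - {i0}"
  show "card L \<le> card (\<Union>i\<in>L. A i - {x})"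
  proof (cases "L = {}")
    case False
    have LI: "L \<subseteq> I" "L \<noteq> I" using L \<open>i0 \<in> I\<close> by auto
    have "finite (\<Union>(A ` L))"
      using finite_subset[OF LI(1) fin(1)] LI(1) fin(2) by (intro finite_UN_I) auto
    moreover have "card L \<le> card (\<Union>(A ` L))" using hall LI(1) by blast
    moreover have "card (\<Union>(A ` L)) \<noteq> card L" using no_tight LI False by blast
    moreover have "(\<Union>i\<in>L. A i - {x}) = \<Union>(A ` L) - {x}" by auto
    ultimately show ?thesis by (auto simp: card_Diff_singleton_if)
  qed simp
qed

theorem Hall_marriage:
  assumes "finite I" "\<forall>i\<in>I. finite (A i)" "\<forall>K\<subseteq>I. card K \<le> card (\<Union>(A ` K))"
  shows "\<exists>f. inj_on f I \<and> (\<forall>i\<in>I. f i \<in> A i)"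
  using assms
proof (induction "card I" arbitrary: I A rule: less_induct)
  case less
  note fin = less.prems(1,2) and hall = less.prems(3)
  have glue: "\<exists>f. inj_on f I \<and> (\<forall>i\<in>I. f i \<in> A i)"
    if K: "K \<subseteq> I" "K \<noteq> {}" and f: "inj_on f K" "\<forall>i\<in>K. f i \<in> A i \<inter> U"
      and hall_rest: "\<forall>L\<subseteq>I - K. card L \<le> card (\<Union>i\<in>L. A i - U)" for K U f
  proof -
    have "card (I - K) < card I"
      using K fin by (intro psubset_card_mono) auto
    moreover have "\<forall>i\<in>I - K. finite (A i - U)" using fin by blast
    ultimately obtain g where g: "inj_on g (I - K)" "\<forall>i\<in>I - K. g i \<in> A i - U"
      using less.hyps[of "I - K" "\<lambda>i. A i - U"] fin hall_rest by blast
    have "inj_on (\<lambda>i. if i \<in> K then f i else g i) (K \<union> (I - K))"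
      by (rule inj_on_glue[where U = U]) (use f g in auto)
    moreover have "K \<union> (I - K) = I" using K by auto
    ultimately show ?thesis using f g by (intro exI[of _ "\<lambda>i. if i \<in> K then f i else g i"]) auto
  qed
  show ?case
  proof (cases "\<exists>K. K \<subseteq> I \<and> K \<noteq> {} \<and> K \<noteq> I \<and> card (\<Union>(A ` K)) = card K")
    case True
    then obtain K where K: "K \<subseteq> I" "K \<noteq> {}" "K \<noteq> I" "card (\<Union>(A ` K)) = card K" by blast
    have "card K < card I" using K fin by (intro psubset_card_mono) auto
    moreover have "finite K" using K(1) fin(1) by (rule finite_subset)
    moreover have "\<forall>i\<in>K. finite (A i)" "\<forall>K'\<subseteq>K. card K' \<le> card (\<Union>(A ` K'))"
      using K(1) fin(2) hall by blast+
    ultimately obtain f where f: "inj_on f K" "\<forall>i\<in>K. f i \<in> A i" using less.hyps[of K A] by blast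
    then have "\<forall>i\<in>K. f i \<in> A i \<inter> \<Union>(A ` K)" by blast
    then show ?thesis by (rule glue[OF K(1,2) f(1) _ Hall_condition_Diff_tight[OF fin hall K(1,4)]])
  next
    case False
    then have no_tight: "\<forall>K\<subseteq>I. K \<noteq> {} \<longrightarrow> K \<noteq> I \<longrightarrow> card (\<Union>(A ` K)) \<noteq> card K" by blast
    show ?thesis
    proof (cases "I = {}")
      case False
      then obtain i0 where i0: "i0 \<in> I" by auto
      have "card {i0} \<le> card (\<Union>(A ` {i0}))" using hall i0 by blast
      then have "A i0 \<noteq> {}" by auto
      then obtain x where x: "x \<in> A i0" by blast
      show ?thesis
      proof (rule glue[where K = "{i0}" and U = "{x}" and f = "\<lambda>_. x"])
        show "\<forall>L\<subseteq>I - {i0}. card L \<le> card (\<Union>i\<in>L. A i - {x})"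
          by (rule Hall_condition_Diff_singleton[OF fin hall no_tight i0])
      qed (use i0 x in auto)
    qed simp
  qed
qed

lemma measure_bind_pmf_le_indicator:
  fixes c :: real
  assumes "\<And>x. x \<in> set_pmf M \<Longrightarrow> measure_pmf.prob (f x) E \<le> (if x \<in> B then c else 0)"
    and "c \<ge> 0"
  shows "measure_pmf.prob (bind_pmf M f) E \<le> measure_pmf.prob M B * c"
proof -
  have "emeasure (measure_pmf (bind_pmf M f)) E = (\<integral>\<^sup>+x. emeasure (measure_pmf (f x)) E \<partial>measure_pmf M)"
    by simp
  also have "\<dots> \<le> (\<integral>\<^sup>+x. ennreal c * indicator B x \<partial>measure_pmf M)"
  proof (rule nn_integral_mono_AE, rule AE_pmfI)
    fix x assume "x \<in> set_pmf M"
    have "emeasure (measure_pmf (f x)) E = ennreal (measure_pmf.prob (f x) E)"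
      by (simp add: measure_pmf.emeasure_eq_measure)
    also have "\<dots> \<le> ennreal (if x \<in> B then c else 0)"
      using assms(1)[OF \<open>x \<in> set_pmf M\<close>] by (rule ennreal_leI)
    also have "\<dots> = ennreal c * indicator B x" by (simp add: indicator_def)
    finally show "emeasure (measure_pmf (f x)) E \<le> ennreal c * indicator B x" .
  qed
  also have "\<dots> = ennreal (measure_pmf.prob M B * c)"
    by (simp add: nn_integral_cmult_indicator measure_pmf.emeasure_eq_measure assms(2)
        ennreal_mult' mult.commute)
  finally show ?thesis using assms(2) by (simp add: measure_pmf.emeasure_eq_measure ennreal_le_iff)
qed

lemma measure_bind_pmf_le:
  fixes c :: real
  assumes "\<And>x. x \<in> set_pmf M \<Longrightarrow> measure_pmf.prob (f x) E \<le> c" "c \<ge> 0"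
  shows "measure_pmf.prob (bind_pmf M f) E \<le> c"
  using measure_bind_pmf_le_indicator[of M f E UNIV c] assms by simp

lemma measure_pmf_UN_le:
  assumes "finite I" "\<And>i. i \<in> I \<Longrightarrow> measure_pmf.prob P (F i) \<le> b i"
  shows "measure_pmf.prob P (\<Union>i\<in>I. F i) \<le> (\<Sum>i\<in>I. b i)"
proof -
  have "measure_pmf.prob P (\<Union>i\<in>I. F i) \<le> (\<Sum>i\<in>I. measure_pmf.prob P (F i))"
    using assms(1) by (intro measure_pmf.finite_measure_subadditive_finite) auto
  also have "\<dots> \<le> (\<Sum>i\<in>I. b i)" using assms(2) by (rule sum_mono)
  finally show ?thesis .
qed

lemma measure_Pi_pmf_all_in_le:
  assumes "finite I" "T \<subseteq> I" "\<And>i. i \<in> T \<Longrightarrow> measure_pmf.prob (P i) B \<le> p"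
  shows "measure_pmf.prob (Pi_pmf I d P) {R. \<forall>i\<in>T. R i \<in> B} \<le> p ^ card T"
proof -
  have "{R. \<forall>i\<in>T. R i \<in> B} = Pi I (\<lambda>i. if i \<in> T then B else UNIV)"
    using assms(2) by (auto simp: Pi_def)
  then have "measure_pmf.prob (Pi_pmf I d P) {R. \<forall>i\<in>T. R i \<in> B}
      = (\<Prod>i\<in>I. measure_pmf.prob (P i) (if i \<in> T then B else UNIV))"
    using assms(1) by (simp add: measure_Pi_pmf_Pi)
  also have "\<dots> \<le> (\<Prod>i\<in>I. if i \<in> T then p else 1)"
    by (intro prod_mono) (auto simp: assms(3))
  also have "\<dots> = p ^ card T"
    using assms(1,2) by (simp add: prod.If_cases Int_absorb1)
  finally show ?thesis .
qed

lemma bidc_step_indep_sets: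
  assumes "finite V" "V \<noteq> {}" "X \<in> indep_sets V E" "Y \<in> set_pmf (bidc_step V E X)"
  shows "Y \<in> indep_sets V E"
  using assms unfolding bidc_step_def by (auto simp: indep_sets_def split: if_splits)

lemma bidc_run_indep_sets:
  assumes "finite V" "V \<noteq> {}" "X \<in> indep_sets V E" "ys \<in> set_pmf (bidc_run V E X t)"
  shows "length ys = t \<and> set ys \<subseteq> indep_sets V E"
  using assms(3,4)
proof (induction t arbitrary: X ys)
  case (Suc t)
  then obtain Y zs where "Y \<in> set_pmf (bidc_step V E X)" "zs \<in> set_pmf (bidc_run V E Y t)" "ys = Y # zs"
    by auto
  then show ?case using Suc bidc_step_indep_sets[OF assms(1,2)] by fastforce
qed simp

lemma prob_bidc_step_contains_edge:
  assumes "finite V" "card V \<ge> 3" "e \<subseteq> V" "card e = 2"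
  shows "measure_pmf.prob (bidc_step V E X) {Y. e \<subseteq> Y} \<le> 1 - 2 / card V"
proof -
  define g where "g = (\<lambda>u. if u \<in> X then X - {u}
          else if insert u X \<in> indep_sets V E then insert u X else X)"
  have g: "\<And>u. g u \<subseteq> insert u X" "\<And>u. u \<in> X \<Longrightarrow> u \<notin> g u" unfolding g_def by auto
  have "card (V \<inter> g -` {Y. e \<subseteq> Y}) \<le> card V - 2"
  proof (cases "e \<subseteq> X")
    case True
    \<comment> \<open>the step must keep both endpoints of \<open>e\<close>, so it does not pick either of them\<close>
    then have "V \<inter> g -` {Y. e \<subseteq> Y} \<subseteq> V - e" using g by blast
    then have "card (V \<inter> g -` {Y. e \<subseteq> Y}) \<le> card (V - e)" using assms(1) by (intro card_mono) auto
    also have "\<dots> = card V - 2" using assms by (simp add: card_Diff_subset finite_subset)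
    finally show ?thesis .
  next
    case False
    then obtain c where c: "c \<in> e" "c \<notin> X" by auto
    then have "V \<inter> g -` {Y. e \<subseteq> Y} \<subseteq> {c}" using g by blast
    then have "card (V \<inter> g -` {Y. e \<subseteq> Y}) \<le> card {c}" by (intro card_mono) auto
    then show ?thesis using assms(2) by simp
  qed
  moreover have "V \<noteq> {}" using assms(2) by auto
  ultimately have "measure_pmf.prob (bidc_step V E X) {Y. e \<subseteq> Y} \<le> (card V - 2) / card V"
    unfolding bidc_step_def g_def[symmetric] using assms(1,2)
    by (auto simp: measure_pmf_of_set of_nat_diff intro!: divide_right_mono)
  also have "\<dots> = 1 - 2 / card V" using assms(2) by (simp add: field_simps of_nat_diff)
  finally show ?thesis .
qed

lemma prob_bidc_run_all_in_le:
  assumes step: "\<And>X. measure_pmf.prob (bidc_step V E X) B \<le> p"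
  shows "C \<subseteq> {..<t} \<Longrightarrow> measure_pmf.prob (bidc_run V E X t) {ys. \<forall>j\<in>C. ys ! j \<in> B} \<le> p ^ card C"
proof (induction t arbitrary: X C)
  case (Suc t)
  define C' where "C' = {j. Suc j \<in> C}"
  have p0: "0 \<le> p" using step[of X] measure_nonneg order_trans by blast
  have "C' \<subseteq> {..<t}" using Suc.prems by (auto simp: C'_def)
  then have IH: "measure_pmf.prob (bidc_run V E Y t) {ys. \<forall>j\<in>C'. ys ! j \<in> B} \<le> p ^ card C'" for Y
    by (rule Suc.IH)
  have cons: "{ys. \<forall>j\<in>C. (Y # ys) ! j \<in> B}
      = (if 0 \<in> C \<and> Y \<notin> B then {} else {ys. \<forall>j\<in>C'. ys ! j \<in> B})" for Y
    by (auto simp: C'_def nth_Cons' split: if_splits)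
  have "C - {0} = Suc ` C'"
  proof (intro equalityI subsetI)
    fix x assume "x \<in> C - {0}"
    then show "x \<in> Suc ` C'" by (intro image_eqI[of x Suc "x - 1"]) (auto simp: C'_def)
  qed (auto simp: C'_def)
  then have "card (C - {0}) = card C'" by (simp add: card_image)
  moreover have "finite C" using Suc.prems finite_subset by blast
  ultimately have card: "card C = card C' + (if 0 \<in> C then 1 else 0)"
    using card.remove[of C 0] by auto
  show ?case
  proof (cases "0 \<in> C")
    case True
    have "measure_pmf.prob (bidc_run V E X (Suc t)) {ys. \<forall>j\<in>C. ys ! j \<in> B}
        \<le> measure_pmf.prob (bidc_step V E X) B * p ^ card C'"
      using IH True p0 by (simp, intro measure_bind_pmf_le_indicator) (simp_all add: cons)
    also have "\<dots> \<le> p * p ^ card C'" using step p0 by (intro mult_right_mono) auto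
    finally show ?thesis using card True by simp
  next
    case False
    have "measure_pmf.prob (bidc_run V E X (Suc t)) {ys. \<forall>j\<in>C. ys ! j \<in> B} \<le> p ^ card C'"
      using IH False p0 by (simp, intro measure_bind_pmf_le) (simp_all add: cons)
    then show ?thesis using card False by simp
  qed
qed simp

lemma prob_bidc_rows_contain_edge:
  assumes "finite V" "card V \<ge> 3" "e \<subseteq> V" "card e = 2" "T \<subseteq> {1..n}" "K \<subseteq> {1..n}"
  shows "measure_pmf.prob (Pi_pmf {1..n} [] (\<lambda>i. bidc_run V E (A i) n))
           {R. \<forall>i\<in>T. \<forall>j\<in>K. e \<subseteq> R i ! (j - 1)} \<le> (1 - 2 / card V) ^ (card T * card K)"
proof -
  define C where "C = (\<lambda>j. j - 1) ` K"
  have C: "C \<subseteq> {..<n}" "card C = card K"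
    using assms(6) unfolding C_def by (force, intro card_image inj_on_diff_nat) auto
  have "{R. \<forall>i\<in>T. \<forall>j\<in>K. e \<subseteq> R i ! (j - 1)} = {R. \<forall>i\<in>T. R i \<in> {ys. \<forall>j\<in>C. ys ! j \<in> {Y. e \<subseteq> Y}}}"
    unfolding C_def by auto
  also have "measure_pmf.prob (Pi_pmf {1..n} [] (\<lambda>i. bidc_run V E (A i) n)) \<dots>
      \<le> ((1 - 2 / card V) ^ card K) ^ card T"
    using prob_bidc_run_all_in_le[OF prob_bidc_step_contains_edge[OF assms(1-4)] C(1)] C(2) assms(5)
    by (intro measure_Pi_pmf_all_in_le) auto
  finally show ?thesis by (simp add: power_mult mult.commute)
qed

lemma no_H_PM_imp_deficient_rectangle:
  assumes "\<not> has_H_PM H n M"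
  obtains K T where "K \<subseteq> {1..n}" "T \<subseteq> {1..n}" "card T = n + 1 - card K"
    "\<forall>i\<in>T. \<forall>j\<in>K. M i j \<notin> H"
proof -
  define rows where "rows = (\<lambda>j. {i\<in>{1..n}. M i j \<in> H})"
  have "\<not> (\<forall>K\<subseteq>{1..n}. card K \<le> card (\<Union>(rows ` K)))"
  proof
    assume "\<forall>K\<subseteq>{1..n}. card K \<le> card (\<Union>(rows ` K))"
    then obtain \<sigma> where \<sigma>: "inj_on \<sigma> {1..n}" "\<forall>j\<in>{1..n}. \<sigma> j \<in> rows j"
      using Hall_marriage[of "{1..n}" rows] by (auto simp: rows_def)
    moreover have "\<sigma> ` {1..n} \<subseteq> {1..n}" using \<sigma>(2) by (auto simp: rows_def)
    ultimately have "bij_betw \<sigma> {1..n} {1..n}"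
      using endo_inj_surj[OF finite_atLeastAtMost] by (simp add: bij_betw_def)
    then show False using assms \<sigma>(2) by (auto simp: has_H_PM_def rows_def)
  qed
  then obtain K where K: "K \<subseteq> {1..n}" "card (\<Union>(rows ` K)) < card K" by (auto simp: not_le)
  have "\<Union>(rows ` K) \<subseteq> {1..n}" by (auto simp: rows_def)
  then have "n + 1 - card K \<le> card ({1..n} - \<Union>(rows ` K))"
    using K(2) by (simp add: card_Diff_subset finite_subset)
  then obtain T where T: "T \<subseteq> {1..n} - \<Union>(rows ` K)" "card T = n + 1 - card K"
    by (rule obtain_subset_with_card_n)
  show thesis
    by (rule that[OF K(1) _ T(2)]) (use T K(1) in \<open>auto simp: rows_def\<close>)
qed

lemma no_H_PM_imp_rectangle_containing_edge:
  assumes V: "finite V" "V \<noteq> {}"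
    and A: "\<forall>i\<in>{1..n}. A i \<in> indep_sets V E"
    and H: "\<forall>X\<in>indep_sets V E. X \<notin> H \<longrightarrow> e \<subseteq> X"
    and R: "R \<in> set_pmf (Pi_pmf {1..n} [] (\<lambda>i. bidc_run V E (A i) n))"
    and no_PM: "\<not> has_H_PM H n (\<lambda>i j. R i ! (j - 1))"
  obtains K T where "K \<subseteq> {1..n}" "T \<subseteq> {1..n}" "card T = n + 1 - card K"
    "\<forall>i\<in>T. \<forall>j\<in>K. e \<subseteq> R i ! (j - 1)"
proof -
  obtain K T where KT: "K \<subseteq> {1..n}" "T \<subseteq> {1..n}" "card T = n + 1 - card K"
    and bad: "\<forall>i\<in>T. \<forall>j\<in>K. R i ! (j - 1) \<notin> H"
    using no_H_PM_imp_deficient_rectangle[OF no_PM] by blast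
  have "e \<subseteq> R i ! (j - 1)" if i: "i \<in> T" and j: "j \<in> K" for i j
  proof -
    have "i \<in> {1..n}" "j \<in> {1..n}" using i j KT by auto
    have "R i \<in> set_pmf (bidc_run V E (A i) n)"
      using R \<open>i \<in> {1..n}\<close> by (simp add: set_Pi_pmf PiE_dflt_def)
    then have "length (R i) = n \<and> set (R i) \<subseteq> indep_sets V E"
      using bidc_run_indep_sets[OF V] A \<open>i \<in> {1..n}\<close> by blast
    then have "R i ! (j - 1) \<in> indep_sets V E" using \<open>j \<in> {1..n}\<close> by auto
    then show ?thesis using H bad i j by blast
  qed
  then show thesis using that KT by blast
qed

lemma prob_no_H_PM_le_deficiency_sum:
  fixes A :: "nat \<Rightarrow> 'a set"
  assumes V: "finite V" "card V \<ge> 3" and e: "e \<subseteq> V" "card e = 2"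
    and H: "\<forall>X\<in>indep_sets V E. X \<notin> H \<longrightarrow> e \<subseteq> X"
    and A: "\<forall>i\<in>{1..n}. A i \<in> indep_sets V E"
  shows "measure_pmf.prob (map_pmf (\<lambda>R i j. R i ! (j - 1)) (Pi_pmf {1..n} [] (\<lambda>i. bidc_run V E (A i) n)))
           {X. \<not> has_H_PM H n X}
         \<le> (\<Sum>c=1..n. real (n choose c) * real (n choose (n + 1 - c)) * (1 - 2 / card V) ^ ((n + 1 - c) * c))"
proof -
  define P where "P = Pi_pmf {1..n} [] (\<lambda>i. bidc_run V E (A i) n)"
  define g where "g = (\<lambda>(R :: nat \<Rightarrow> 'a set list) i j. R i ! (j - 1))"
  define subsets where "subsets = (\<lambda>c. {K. K \<subseteq> {1..n} \<and> card K = c})"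
  define rect where "rect = (\<lambda>T K. {R :: nat \<Rightarrow> 'a set list. \<forall>i\<in>T. \<forall>j\<in>K. e \<subseteq> R i ! (j - 1)})"
  have cover: "g -` {X. \<not> has_H_PM H n X} \<inter> set_pmf P
      \<subseteq> (\<Union>c\<in>{1..n}. \<Union>K\<in>subsets c. \<Union>T\<in>subsets (n + 1 - c). rect T K)"
  proof
    fix R assume R: "R \<in> g -` {X. \<not> has_H_PM H n X} \<inter> set_pmf P"
    have "V \<noteq> {}" using V(2) by auto
    then obtain K T where KT: "K \<subseteq> {1..n}" "T \<subseteq> {1..n}" "card T = n + 1 - card K"
      and "\<forall>i\<in>T. \<forall>j\<in>K. e \<subseteq> R i ! (j - 1)"
      using no_H_PM_imp_rectangle_containing_edge[OF V(1) _ A H, of R] R by (auto simp: P_def g_def)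
    then have "R \<in> rect T K" by (simp add: rect_def)
    moreover have "card T \<le> n" "card K \<le> n"
      using card_mono[OF finite_atLeastAtMost KT(2)] card_mono[OF finite_atLeastAtMost KT(1)] by simp_all
    then have "card K \<in> {1..n}" using KT(3) by simp
    moreover have "K \<in> subsets (card K)" "T \<in> subsets (n + 1 - card K)" using KT by (simp_all add: subsets_def)
    ultimately show "R \<in> (\<Union>c\<in>{1..n}. \<Union>K\<in>subsets c. \<Union>T\<in>subsets (n + 1 - c). rect T K)"
      by blast
  qed
  have "measure_pmf.prob (map_pmf g P) {X. \<not> has_H_PM H n X}
      = measure_pmf.prob P (g -` {X. \<not> has_H_PM H n X} \<inter> set_pmf P)"
    by (simp add: measure_Int_set_pmf)
  also have "\<dots> \<le> measure_pmf.prob P (\<Union>c\<in>{1..n}. \<Union>K\<in>subsets c. \<Union>T\<in>subsets (n + 1 - c). rect T K)"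
    using cover by (rule measure_pmf.finite_measure_mono) simp
  also have "\<dots> \<le> (\<Sum>c=1..n. \<Sum>K\<in>subsets c. \<Sum>T\<in>subsets (n + 1 - c). (1 - 2 / card V) ^ ((n + 1 - c) * c))"
  proof (intro measure_pmf_UN_le)
    fix c K T assume "K \<in> subsets c" "T \<in> subsets (n + 1 - c)"
    then show "measure_pmf.prob P (rect T K) \<le> (1 - 2 / card V) ^ ((n + 1 - c) * c)"
      using prob_bidc_rows_contain_edge[OF V e, of T n K E A] by (simp add: subsets_def rect_def P_def)
  qed (simp_all add: subsets_def)
  also have "\<dots> = (\<Sum>c=1..n. real (n choose c) * real (n choose (n + 1 - c)) * (1 - 2 / card V) ^ ((n + 1 - c) * c))"
    by (simp add: subsets_def n_subsets mult.assoc)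
  finally show ?thesis by (simp add: P_def g_def)
qed

lemma eight_mult_power_6_le_exp: "21 \<le> N \<Longrightarrow> 8 * real N ^ 6 \<le> exp (real N)"
proof (induction N rule: nat_induct_at_least)
  case base
  have "(27/10::real) \<le> (1 + 1/100) powr 100" by (simp add: powr_realpow power_divide)
  also have "\<dots> < exp 1" by (rule exp_1_gt_powr) simp
  finally have "(27/10::real) ^ 21 \<le> exp 1 ^ 21" by (intro power_mono) auto
  moreover have "8 * 21 ^ 6 \<le> (27/10::real) ^ 21" by (simp add: power_divide)
  ultimately show ?case by (simp add: exp_of_nat_mult[symmetric])
next
  case (Suc N)
  \<comment> \<open>\<open>((N + 1)/N)\<^sup>6 \<le> (22/21)\<^sup>6 < 2\<close> for \<open>N \<ge> 21\<close>, while \<open>exp\<close> gains a factor \<open>e > 2\<close>\<close>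
  have N: "real N \<ge> 21" using Suc by simp
  have "real (Suc N) ^ 6 = ((real N + 1) / real N) ^ 6 * real N ^ 6"
    using N by (simp add: power_divide add.commute)
  also have "\<dots> \<le> (22/21) ^ 6 * real N ^ 6"
    using N by (intro mult_right_mono power_mono) (auto simp: field_simps)
  also have "\<dots> \<le> 2 * real N ^ 6" by (intro mult_right_mono) (auto simp: power_divide)
  finally have "8 * real (Suc N) ^ 6 \<le> 2 * exp (real N)" using Suc.IH by simp
  also have "\<dots> \<le> exp 1 * exp (real N)" using exp_ge_add_one_self[of 1] by (intro mult_right_mono) auto
  finally show ?case by (simp add: exp_add[symmetric] add.commute)
qed

lemma binomial_le_power_min:
  assumes "k \<le> n"
  shows "n choose k \<le> n ^ min k (n - k)"
proof (cases "k \<le> n - k")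
  case True
  then show ?thesis using binomial_le_pow[OF assms] by (simp add: min_def)
next
  case False
  have "n choose k = n choose (n - k)" using assms by (rule binomial_symmetric)
  also have "\<dots> \<le> n ^ (n - k)" by (rule binomial_le_pow) simp
  finally show ?thesis using False by (simp add: min_def)
qed

lemma power_one_minus_two_div_le_exp:
  fixes N k m :: nat
  assumes "2 \<le> N" "m * N\<^sup>2 \<le> k"
  shows "(1 - 2 / real N) ^ k \<le> exp (- 2 * real N) ^ m"
proof -
  have "(1 - 2 / real N) ^ k \<le> exp (- 2 / real N) ^ k"
    using assms(1) exp_ge_add_one_self[of "- 2 / real N"] by (intro power_mono) (auto simp: field_simps)
  also have "\<dots> = exp (- 2 / real N * real k)" by (simp add: exp_of_nat_mult[symmetric] mult.commute)
  also have "\<dots> \<le> exp (- 2 / real N * real (m * N\<^sup>2))"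
    using of_nat_mono[OF assms(2), where 'a = real] by (intro exp_mono mult_left_mono_neg) auto
  also have "\<dots> = exp (- 2 * real N) ^ m"
    using assms(1) by (simp add: exp_of_nat_mult[symmetric] power2_eq_square field_simps)
  finally show ?thesis .
qed

lemma deficiency_term_le:
  fixes N n c :: nat
  assumes N: "21 \<le> N" and n: "n = 2 * N\<^sup>2" and c: "1 \<le> c" "c \<le> n"
  shows "real (n choose c) * real (n choose (n + 1 - c)) * (1 - 2 / real N) ^ ((n + 1 - c) * c)
         \<le> real n ^ 2 * exp (- 2 * real N)"
proof -
  define t where "t = n + 1 - c"
  define m where "m = min c t"
  have m: "1 \<le> m" "min c (n - c) \<le> m" "min t (n - t) \<le> m" using c by (auto simp: m_def t_def)
  have n1: "1 \<le> n" using c by simp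
  have "n choose c \<le> n ^ m"
    using binomial_le_power_min[of c n] power_increasing[OF m(2) n1] c(2) by linarith
  moreover have "n choose t \<le> n ^ m"
    using binomial_le_power_min[of t n] power_increasing[OF m(3) n1] c(1) t_def by linarith
  ultimately have binomials: "real (n choose c) * real (n choose t) \<le> (real n ^ 2) ^ m"
    using mult_mono[of "real (n choose c)" "real (n ^ m)" "real (n choose t)" "real (n ^ m)"]
    by (simp add: power_mult_distrib power2_eq_square)
  \<comment> \<open>\<open>t c = m \<cdot> max c t\<close> and \<open>max c t \<ge> (n + 1)/2 > N\<^sup>2\<close>\<close>
  have "m * N\<^sup>2 \<le> t * c"
    using n mult_le_mono2[of "N\<^sup>2" "max c t" m] by (auto simp: m_def t_def min_def max_def mult.commute)
  then have decay: "(1 - 2 / real N) ^ (t * c) \<le> exp (- 2 * real N) ^ m"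
    using N by (intro power_one_minus_two_div_le_exp) auto
  have "real n ^ 2 = 4 * real N ^ 4" using n by (simp add: power_mult_distrib flip: power_mult)
  also have "\<dots> \<le> exp (real N)"
  proof -
    have "real N ^ 4 \<le> real N ^ 6" using N by (intro power_increasing) auto
    then show ?thesis using eight_mult_power_6_le_exp[OF N] zero_le_power[of "real N" 6] by linarith
  qed
  finally have "real n ^ 2 * exp (- 2 * real N) \<le> exp (real N) * exp (- 2 * real N)"
    by (intro mult_right_mono) auto
  also have "\<dots> \<le> 1" by (simp flip: exp_add)
  finally have base: "real n ^ 2 * exp (- 2 * real N) \<le> 1" .
  have "real (n choose c) * real (n choose t) * (1 - 2 / real N) ^ (t * c)
      \<le> (real n ^ 2 * exp (- 2 * real N)) ^ m"
    using binomials decay N by (simp add: power_mult_distrib, intro mult_mono) auto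
  also have "\<dots> \<le> real n ^ 2 * exp (- 2 * real N)"
    using power_decreasing[OF m(1) _ base] by simp
  finally show ?thesis by (simp add: t_def)
qed

lemma deficiency_sum_le:
  fixes N n :: nat
  assumes N: "21 \<le> N" and n: "n = 2 * N\<^sup>2"
  shows "(\<Sum>c=1..n. real (n choose c) * real (n choose (n + 1 - c)) * (1 - 2 / real N) ^ ((n + 1 - c) * c))
         \<le> exp (- real N)"
proof -
  have "(\<Sum>c=1..n. real (n choose c) * real (n choose (n + 1 - c)) * (1 - 2 / real N) ^ ((n + 1 - c) * c))
      \<le> (\<Sum>c=1..n. real n ^ 2 * exp (- 2 * real N))"
    by (intro sum_mono deficiency_term_le[OF N n]) auto
  also have "\<dots> = real n ^ 3 * exp (- 2 * real N)" by (simp add: power3_eq_cube power2_eq_square)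
  also have "real n ^ 3 = 8 * real N ^ 6" using n by (simp add: power_mult_distrib flip: power_mult)
  also have "8 * real N ^ 6 * exp (- 2 * real N) \<le> exp (real N) * exp (- 2 * real N)"
    using eight_mult_power_6_le_exp[OF N] by (intro mult_right_mono) auto
  also have "\<dots> = exp (- real N)" by (simp flip: exp_add)
  finally show ?thesis .
qed

theorem theorem4:
  fixes V :: "'a set" and es :: "'a set list" and N k :: nat
    and init :: "(nat \<Rightarrow> 'a set) pmf"
  assumes "finite V" and "card V = N" and "N \<ge> 21"
    and "\<forall>e\<in>set es. e \<subseteq> V \<and> card e = 2" and "distinct es"
    and "k < length es"
    and "\<forall>A\<in>set_pmf init. \<forall>i\<in>{1..2 * N^2}. A i \<in> indep_sets V (set (take k es))"
  shows "measure_pmf.prob (bidc_matrix V (set (take k es)) init (2 * N^2))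
           {X. \<not> has_H_PM (indep_sets V (set (take (Suc k) es))) (2 * N^2) X}
         \<le> exp (- real N)"
proof -
  define n E H e where "n = 2 * N^2" and "E = set (take k es)"
    and "H = indep_sets V (set (take (Suc k) es))" and "e = es ! k"
  have e: "e \<subseteq> V" "card e = 2" using assms(4,6) by (auto simp: e_def)
  have "set (take (Suc k) es) = insert e E" using assms(6) by (simp add: take_Suc_conv_app_nth e_def E_def)
  then have H: "\<forall>X\<in>indep_sets V E. X \<notin> H \<longrightarrow> e \<subseteq> X" by (auto simp: H_def indep_sets_def)
  have V: "3 \<le> card V" using assms(2,3) by simp
  show ?thesis
    unfolding bidc_matrix_def n_def[symmetric] E_def[symmetric] H_def[symmetric]
  proof (rule measure_bind_pmf_le)
    fix A assume "A \<in> set_pmf init"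
    then have "\<forall>i\<in>{1..n}. A i \<in> indep_sets V E" using assms(7) by (simp add: n_def E_def)
    from prob_no_H_PM_le_deficiency_sum[OF assms(1) V e H this]
    show "measure_pmf.prob (map_pmf (\<lambda>R i j. R i ! (j - 1))
        (Pi_pmf {1..n} [] (\<lambda>i. bidc_run V E (A i) n))) {X. \<not> has_H_PM H n X} \<le> exp (- real N)"
      unfolding assms(2) by (rule order_trans[OF _ deficiency_sum_le[OF assms(3) n_def]])
  qed simp
qed

end
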